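(* Let $\mathcal{X}$ be a connected $n$-premaniplex with base flag $x_0$, let $(\mathcal{Y},\eta)$ be an $(n,m)$-voltage operator with $\mathcal{Y}$ connected and base flag $y_0$, let $N=\operatorname{Stab}_{\mathcal{C}^n}(x_0)$, $L=\operatorname{Stab}_{\mathcal{C}^m}(y_0)$, and $\zeta:L\to\mathcal{C}^n$, $\zeta(\omega)=\eta(W_\omega(y_0))$. If $\mathcal{X}\rtimes_\eta\mathcal{Y}$ is connected and every automorphism of $\mathcal{X}\rtimes_\eta\mathcal{Y}$ is induced by an automorphism of $\mathcal{X}$, then $\operatorname{N}_{\mathcal{C}^m}(\zeta^{-1}(N))\subseteq L$. Conversely, if $(\mathcal{Y},\eta)$ preserves connectivity and $\operatorname{N}_{\mathcal{C}^m}(\zeta^{-1}(N))\subseteq L$, then every automorphism of $\mathcal{X}\rtimes_\eta\mathcal{Y}$ is induced by an automorphism of $\mathcal{X}$.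
   Context: An $n$-premaniplex is an edge-coloured graph (semi-edges and parallel edges allowed) with colours $\{0,\dots,n-1\}$ such that every vertex (flag) is the start of exactly one dart of each colour, and for $|i-j|\ge2$ alternating $i,j$-paths of length 4 are closed; $x^i$ is the $i$-adjacent flag of $x$. $\mathcal{C}^n=\langle r_0,\dots,r_{n-1}\mid r_i^2,\ (r_ir_j)^2\ (|i-j|\ge2)\rangle$ acts on the left on flags by $r_ix=x^i$; automorphisms act on the right. For a flag $y$ of an $m$-premaniplex $\mathcal{Y}$ and $\omega\in\mathcal{C}^m$, $W_\omega(y)$ is the homotopy class of paths from $y$ whose colour sequence $i_1,\dots,i_k$ satisfies $r_{i_k}\cdots r_{i_1}=\omega$; these form the fundamental groupoid $\Pi(\mathcal{Y})$. A voltage assignment $\eta:\Pi(\mathcal{Y})\to\mathcal{C}^n$ satisfies $\eta(W_1W_2)=\eta(W_2)\eta(W_1)$; $(\mathcal{Y},\eta)$ is an $(n,m)$-voltage operator. $\mathcal{X}\rtimes_\eta\mathcal{Y}$ has flags $\mathcal{X}\times\mathcal{Y}$ and $(x,y)^i=(\eta(W_{r_i}(y))x,r_iy)$, $i\in\{0,\dots,m-1\}$. An automorphism $\gamma$ of $\mathcal{X}\rtimes_\eta\mathcal{Y}$ is induced by an automorphism of $\mathcal{X}$ if there is $\alpha\in\operatorname{Aut}(\mathcal{X})$ with $(x,y)\gamma=(x\alpha,y)$ for all $(x,y)$. The operator preserves connectivity if $\mathcal{X}\rtimes_\eta\mathcal{Y}$ is connected whenever $\mathcal{X}$ is. Standing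 convention: $\mathcal{Y}$ has a spanning tree all of whose darts have trivial voltage. *)

theory Defs
  imports "HOL-Algebra.Group_Action"
begin

text \<open>A word [a_1,...,a_k] (letters < n) stands for the product r_{a_1} r_{a_2} ... r_{a_k}.
  cox_eq n is the congruence on words generated by the defining relations.\<close>

inductive_set cox_eq :: "nat \<Rightarrow> (nat list \<times> nat list) set" for n :: nat where
  cox_refl: "w \<in> lists {..<n} \<Longrightarrow> (w, w) \<in> cox_eq n"
| cox_sym: "(u, v) \<in> cox_eq n \<Longrightarrow> (v, u) \<in> cox_eq n"
| cox_trans: "(u, v) \<in> cox_eq n \<Longrightarrow> (v, w) \<in> cox_eq n \<Longrightarrow> (u, w) \<in> cox_eq n"
| cox_inv: "u \<in> lists {..<n} \<Longrightarrow> v \<in> lists {..<n} \<Longrightarrow> i < n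
            \<Longrightarrow> (u @ [i, i] @ v, u @ v) \<in> cox_eq n"
| cox_comm: "u \<in> lists {..<n} \<Longrightarrow> v \<in> lists {..<n} \<Longrightarrow> i < n \<Longrightarrow> j < n
            \<Longrightarrow> (i + 2 \<le> j \<or> j + 2 \<le> i)
            \<Longrightarrow> (u @ [i, j, i, j] @ v, u @ v) \<in> cox_eq n"

definition Cox :: "nat \<Rightarrow> nat list set monoid" where
  "Cox n = \<lparr> carrier = lists {..<n} // cox_eq n,
             mult = (\<lambda>A B. cox_eq n `` {(SOME a. a \<in> A) @ (SOME b. b \<in> B)}),
             one = cox_eq n `` {[]} \<rparr>"

definition cox_gen :: "nat \<Rightarrow> nat \<Rightarrow> nat list set" where
  "cox_gen n i = cox_eq n `` {[i]}"

text \<open>An n-premaniplex is given by its set of flags F and the adjacency maps adj i (x |-> x^i),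
  i < n; the dart of colour i starting at x ends at adj i x (a semi-edge iff adj i x = x).\<close>
definition premaniplex :: "nat \<Rightarrow> 'a set \<Rightarrow> (nat \<Rightarrow> 'a \<Rightarrow> 'a) \<Rightarrow> bool" where
  "premaniplex n F adj \<longleftrightarrow>
     (\<forall>i<n. \<forall>x\<in>F. adj i x \<in> F \<and> adj i (adj i x) = x) \<and>
     (\<forall>i<n. \<forall>j<n. (i + 2 \<le> j \<or> j + 2 \<le> i) \<longrightarrow>
        (\<forall>x\<in>F. adj i (adj j (adj i (adj j x))) = x))"

definition word_act :: "(nat \<Rightarrow> 'a \<Rightarrow> 'a) \<Rightarrow> nat list \<Rightarrow> 'a \<Rightarrow> 'a" where
  "word_act adj w x = foldr adj w x"

definition cox_act :: "(nat \<Rightarrow> 'a \<Rightarrow> 'a) \<Rightarrow> nat list set \<Rightarrow> 'a \<Rightarrow> 'a" where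
  "cox_act adj A x = word_act adj (SOME w. w \<in> A) x"

definition connected_pm :: "nat \<Rightarrow> 'a set \<Rightarrow> (nat \<Rightarrow> 'a \<Rightarrow> 'a) \<Rightarrow> bool" where
  "connected_pm n F adj \<longleftrightarrow> (\<forall>x\<in>F. \<forall>y\<in>F. \<exists>w\<in>lists {..<n}. y = word_act adj w x)"

definition pm_aut :: "nat \<Rightarrow> 'a set \<Rightarrow> (nat \<Rightarrow> 'a \<Rightarrow> 'a) \<Rightarrow> ('a \<Rightarrow> 'a) \<Rightarrow> bool" where
  "pm_aut n F adj \<gamma> \<longleftrightarrow> bij_betw \<gamma> F F \<and> (\<forall>x\<in>F. \<forall>i<n. \<gamma> (adj i x) = adj i (\<gamma> x))"

text \<open>The homotopy class W_omega(y) of an m-premaniplex is identified with the pair (y, omega),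
  y a flag, omega \<in> C^m; a voltage assignment is thus a function eta y omega with values in C^n.
  Concatenation: W_omega(y) W_psi(omega y) = W_{psi omega}(y).\<close>
definition voltage_assignment ::
  "nat \<Rightarrow> nat \<Rightarrow> 'b set \<Rightarrow> (nat \<Rightarrow> 'b \<Rightarrow> 'b) \<Rightarrow> ('b \<Rightarrow> nat list set \<Rightarrow> nat list set) \<Rightarrow> bool" where
  "voltage_assignment n m FY adjY eta \<longleftrightarrow>
     (\<forall>y\<in>FY. \<forall>\<omega>\<in>carrier (Cox m). eta y \<omega> \<in> carrier (Cox n)) \<and>
     (\<forall>y\<in>FY. \<forall>\<omega>\<in>carrier (Cox m). \<forall>\<psi>\<in>carrier (Cox m).
        eta y (\<psi> \<otimes>\<^bsub>Cox m\<^esub> \<omega>) = eta (cox_act adjY \<omega> y) \<psi> \<otimes>\<^bsub>Cox n\<^esub> eta y \<omega>)"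

definition voltage_operator ::
  "nat \<Rightarrow> nat \<Rightarrow> 'b set \<Rightarrow> (nat \<Rightarrow> 'b \<Rightarrow> 'b) \<Rightarrow> ('b \<Rightarrow> nat list set \<Rightarrow> nat list set) \<Rightarrow> bool" where
  "voltage_operator n m FY adjY eta \<longleftrightarrow>
     premaniplex m FY adjY \<and> voltage_assignment n m FY adjY eta"

fun tree_walk :: "('b \<times> nat) set \<Rightarrow> (nat \<Rightarrow> 'b \<Rightarrow> 'b) \<Rightarrow> 'b \<Rightarrow> nat list \<Rightarrow> bool" where
  "tree_walk T adj y [] = True"
| "tree_walk T adj y (i # ws) = ((y, i) \<in> T \<and> tree_walk T adj (adj i y) ws)"

definition walk_end :: "(nat \<Rightarrow> 'b \<Rightarrow> 'b) \<Rightarrow> 'b \<Rightarrow> nat list \<Rightarrow> 'b" where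
  "walk_end adj y ws = fold adj ws y"

text \<open>No backtracking (at a flag, darts of distinct colours are distinct).\<close>
definition reduced_walk :: "nat list \<Rightarrow> bool" where
  "reduced_walk ws \<longleftrightarrow> (\<forall>k. Suc k < length ws \<longrightarrow> ws ! k \<noteq> ws ! Suc k)"

definition spanning_tree :: "nat \<Rightarrow> 'b set \<Rightarrow> (nat \<Rightarrow> 'b \<Rightarrow> 'b) \<Rightarrow> ('b \<times> nat) set \<Rightarrow> bool" where
  "spanning_tree m F adj T \<longleftrightarrow>
     T \<subseteq> {(y, i). y \<in> F \<and> i < m \<and> adj i y \<noteq> y} \<and>
     (\<forall>(y, i)\<in>T. (adj i y, i) \<in> T) \<and>
     (\<forall>y\<in>F. \<forall>z\<in>F. \<exists>ws. tree_walk T adj y ws \<and> walk_end adj y ws = z) \<and>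
     (\<forall>y\<in>F. \<forall>ws. tree_walk T adj y ws \<and> reduced_walk ws \<and> walk_end adj y ws = y \<longrightarrow> ws = [])"

text \<open>Standing convention: Y has a spanning tree all of whose darts have trivial voltage.\<close>
definition trivial_tree_convention ::
  "nat \<Rightarrow> nat \<Rightarrow> 'b set \<Rightarrow> (nat \<Rightarrow> 'b \<Rightarrow> 'b) \<Rightarrow> ('b \<Rightarrow> nat list set \<Rightarrow> nat list set) \<Rightarrow> bool" where
  "trivial_tree_convention n m FY adjY eta \<longleftrightarrow>
     (\<exists>T. spanning_tree m FY adjY T \<and> (\<forall>(y, i)\<in>T. eta y (cox_gen m i) = \<one>\<^bsub>Cox n\<^esub>))"

definition vprod_flags :: "'a set \<Rightarrow> 'b set \<Rightarrow> ('a \<times> 'b) set" where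
  "vprod_flags FX FY = FX \<times> FY"

definition vprod_adj ::
  "nat \<Rightarrow> (nat \<Rightarrow> 'a \<Rightarrow> 'a) \<Rightarrow> ('b \<Rightarrow> nat list set \<Rightarrow> nat list set) \<Rightarrow> (nat \<Rightarrow> 'b \<Rightarrow> 'b)
     \<Rightarrow> nat \<Rightarrow> 'a \<times> 'b \<Rightarrow> 'a \<times> 'b" where
  "vprod_adj m adjX eta adjY i xy =
     (cox_act adjX (eta (snd xy) (cox_gen m i)) (fst xy), adjY i (snd xy))"

definition induced_by_X ::
  "nat \<Rightarrow> 'a set \<Rightarrow> (nat \<Rightarrow> 'a \<Rightarrow> 'a) \<Rightarrow> 'b set \<Rightarrow> ('a \<times> 'b \<Rightarrow> 'a \<times> 'b) \<Rightarrow> bool" where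
  "induced_by_X n FX adjX FY \<gamma> \<longleftrightarrow>
     (\<exists>\<alpha>. pm_aut n FX adjX \<alpha> \<and> (\<forall>x\<in>FX. \<forall>y\<in>FY. \<gamma> (x, y) = (\<alpha> x, y)))"

text \<open>Connected premaniplexes are countable, so (up to isomorphism) it suffices to let X range over
  premaniplexes whose flags are natural numbers.\<close>
definition preserves_connectivity ::
  "nat \<Rightarrow> nat \<Rightarrow> 'b set \<Rightarrow> (nat \<Rightarrow> 'b \<Rightarrow> 'b) \<Rightarrow> ('b \<Rightarrow> nat list set \<Rightarrow> nat list set) \<Rightarrow> bool" where
  "preserves_connectivity n m FY adjY eta \<longleftrightarrow>
     (\<forall>(FX :: nat set) adjX. premaniplex n FX adjX \<and> connected_pm n FX adjX \<longrightarrow>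
        connected_pm m (vprod_flags FX FY) (vprod_adj m adjX eta adjY))"

end

(*
  The group C^m acts on the flags of every m-premaniplex P, transitively when P is connected,
  and automorphisms commute with this action. Hence an automorphism of a connected P is
  determined by the image c of a base flag b, and one with b |-> c exists iff Stab(c) = Stab(b);
  writing c = g b, this says that g normalises Stab(b).

  For P = X x_eta Y the action is g (x, y) = (eta(W_g(y)) x, g y), so the stabiliser of
  (x0, y0) is zeta^-1(N), and an automorphism moving (x0, y0) to g (x0, y0) keeps y0 iff g lies
  in L. If all automorphisms are induced by X, the normaliser of zeta^-1(N) therefore lies in L.
  Conversely, applying preservation of connectivity to the universal premaniplex (the Cayley
  graph of C^n) shows that zeta maps L onto C^n; then X x_eta Y is connected, each
  automorphism fixes the Y-coordinate of (x0, y0) and hence of every flag, the spanning tree of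
  trivial voltage makes its X-coordinate independent of y, and the generators r_j = zeta(psi),
  psi in L, show that this X-coordinate commutes with every j-adjacency of X.
*)
theory Submission
  imports Defs "HOL-Library.Countable_Set"
begin

section \<open>The universal Coxeter group\<close>

lemma cox_eq_in_lists: "(u, v) \<in> cox_eq n \<Longrightarrow> u \<in> lists {..<n} \<and> v \<in> lists {..<n}"
  by (induction rule: cox_eq.induct) auto

lemma cox_eq_append_left:
  "(u, v) \<in> cox_eq n \<Longrightarrow> w \<in> lists {..<n} \<Longrightarrow> (w @ u, w @ v) \<in> cox_eq n"
proof (induction rule: cox_eq.induct)
  case (cox_refl u)
  then show ?case by (intro cox_eq.cox_refl) auto
next
  case (cox_inv u v i)
  then show ?case using cox_eq.cox_inv[of "w @ u" n v i] by auto
next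
  case (cox_comm u v i j)
  then show ?case using cox_eq.cox_comm[of "w @ u" n v i j] by auto
qed (auto intro: cox_eq.intros)

lemma cox_eq_append_right:
  "(u, v) \<in> cox_eq n \<Longrightarrow> w \<in> lists {..<n} \<Longrightarrow> (u @ w, v @ w) \<in> cox_eq n"
proof (induction rule: cox_eq.induct)
  case (cox_refl u)
  then show ?case by (intro cox_eq.cox_refl) auto
next
  case (cox_inv u v i)
  then show ?case using cox_eq.cox_inv[of u n "v @ w" i] by auto
next
  case (cox_comm u v i j)
  then show ?case using cox_eq.cox_comm[of u n "v @ w" i j] by auto
qed (auto intro: cox_eq.intros)

lemma cox_eq_append: "(u, u') \<in> cox_eq n \<Longrightarrow> (v, v') \<in> cox_eq n \<Longrightarrow> (u @ v, u' @ v') \<in> cox_eq n"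
  by (meson cox_eq.cox_trans cox_eq_append_left cox_eq_append_right cox_eq_in_lists)

lemma equiv_cox_eq: "equiv (lists {..<n}) (cox_eq n)"
  by (intro equivI refl_onI symI transI) (auto intro: cox_eq.intros dest: cox_eq_in_lists)

lemma cox_eq_rev_append: "w \<in> lists {..<n} \<Longrightarrow> (rev w @ w, []) \<in> cox_eq n"
proof (induction w)
  case (Cons a w)
  then have "(rev w @ [a, a] @ w, rev w @ w) \<in> cox_eq n"
    by (intro cox_eq.cox_inv) auto
  with Cons show ?case by (auto intro: cox_eq.cox_trans)
qed (simp add: cox_eq.cox_refl)

definition cox_class :: "nat \<Rightarrow> nat list \<Rightarrow> nat list set" where
  "cox_class n w = cox_eq n `` {w}"

lemma mem_cox_class_iff: "v \<in> cox_class n u \<longleftrightarrow> (u, v) \<in> cox_eq n"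
  by (simp add: cox_class_def)

lemma cox_class_eq_iff:
  "u \<in> lists {..<n} \<Longrightarrow> v \<in> lists {..<n} \<Longrightarrow> cox_class n u = cox_class n v \<longleftrightarrow> (u, v) \<in> cox_eq n"
  unfolding cox_class_def using eq_equiv_class_iff[OF equiv_cox_eq] by blast

lemma carrier_Cox: "carrier (Cox n) = cox_class n ` lists {..<n}"
  unfolding Cox_def cox_class_def quotient_def by auto

lemma cox_class_in_carrier: "w \<in> lists {..<n} \<Longrightarrow> cox_class n w \<in> carrier (Cox n)"
  by (simp add: carrier_Cox)

lemma carrier_CoxE:
  assumes "A \<in> carrier (Cox n)"
  obtains w where "w \<in> lists {..<n}" "A = cox_class n w"
  using assms by (auto simp: carrier_Cox)

lemma cox_eq_some_member:
  assumes "w \<in> lists {..<n}"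
  shows "(w, SOME v. v \<in> cox_class n w) \<in> cox_eq n"
proof -
  have "w \<in> cox_class n w" using assms by (simp add: mem_cox_class_iff cox_eq.cox_refl)
  then have "(SOME v. v \<in> cox_class n w) \<in> cox_class n w" by (rule someI)
  then show ?thesis by (simp only: mem_cox_class_iff)
qed

lemma mult_Cox_eq_some:
  "A \<otimes>\<^bsub>Cox n\<^esub> B = cox_class n ((SOME a. a \<in> A) @ (SOME b. b \<in> B))"
  unfolding Cox_def cox_class_def by simp

lemma mult_Cox:
  assumes "u \<in> lists {..<n}" "v \<in> lists {..<n}"
  shows "cox_class n u \<otimes>\<^bsub>Cox n\<^esub> cox_class n v = cox_class n (u @ v)"
proof -
  have "((SOME a. a \<in> cox_class n u) @ (SOME b. b \<in> cox_class n v), u @ v) \<in> cox_eq n"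
    using assms by (intro cox_eq_append cox_eq.cox_sym[OF cox_eq_some_member])
  then have "cox_class n ((SOME a. a \<in> cox_class n u) @ (SOME b. b \<in> cox_class n v)) = cox_class n (u @ v)"
    by (meson cox_class_eq_iff cox_eq_in_lists)
  then show ?thesis by (simp only: mult_Cox_eq_some)
qed

lemma one_Cox: "\<one>\<^bsub>Cox n\<^esub> = cox_class n []"
  by (simp add: Cox_def cox_class_def)

lemma cox_gen_eq_cox_class: "cox_gen n i = cox_class n [i]"
  by (simp add: cox_gen_def cox_class_def)

lemma cox_class_Cons:
  "i < n \<Longrightarrow> w \<in> lists {..<n} \<Longrightarrow> cox_class n (i # w) = cox_gen n i \<otimes>\<^bsub>Cox n\<^esub> cox_class n w"
  using mult_Cox[of "[i]" n w] by (simp add: cox_gen_eq_cox_class)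

lemma group_Cox: "group (Cox n)"
proof (rule groupI)
  fix A assume "A \<in> carrier (Cox n)"
  then obtain w where w: "w \<in> lists {..<n}" "A = cox_class n w" by (rule carrier_CoxE)
  then have rev_w: "rev w \<in> lists {..<n}" by auto
  with w have "cox_class n (rev w) \<otimes>\<^bsub>Cox n\<^esub> A = \<one>\<^bsub>Cox n\<^esub>"
    by (simp add: mult_Cox one_Cox cox_class_eq_iff cox_eq_rev_append)
  moreover have "cox_class n (rev w) \<in> carrier (Cox n)"
    using rev_w by (rule cox_class_in_carrier)
  ultimately show "\<exists>B\<in>carrier (Cox n). B \<otimes>\<^bsub>Cox n\<^esub> A = \<one>\<^bsub>Cox n\<^esub>" by blast
next
  fix A B assume "A \<in> carrier (Cox n)" "B \<in> carrier (Cox n)"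
  then obtain u v where "u \<in> lists {..<n}" "v \<in> lists {..<n}" "A = cox_class n u" "B = cox_class n v"
    by (meson carrier_CoxE)
  then show "A \<otimes>\<^bsub>Cox n\<^esub> B \<in> carrier (Cox n)"
    by (simp add: mult_Cox cox_class_in_carrier)
next
  fix A B C assume "A \<in> carrier (Cox n)" "B \<in> carrier (Cox n)" "C \<in> carrier (Cox n)"
  then obtain u v w where "u \<in> lists {..<n}" "v \<in> lists {..<n}" "w \<in> lists {..<n}"
    "A = cox_class n u" "B = cox_class n v" "C = cox_class n w"
    by (meson carrier_CoxE)
  then show "A \<otimes>\<^bsub>Cox n\<^esub> B \<otimes>\<^bsub>Cox n\<^esub> C = A \<otimes>\<^bsub>Cox n\<^esub> (B \<otimes>\<^bsub>Cox n\<^esub> C)"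
    by (simp add: mult_Cox)
next
  fix A assume "A \<in> carrier (Cox n)"
  then obtain w where "w \<in> lists {..<n}" "A = cox_class n w" by (rule carrier_CoxE)
  then show "\<one>\<^bsub>Cox n\<^esub> \<otimes>\<^bsub>Cox n\<^esub> A = A"
    by (simp add: mult_Cox one_Cox)
qed (simp add: one_Cox cox_class_in_carrier)

lemma cox_gen_in_carrier: "i < n \<Longrightarrow> cox_gen n i \<in> carrier (Cox n)"
  by (simp add: cox_gen_eq_cox_class cox_class_in_carrier)

lemma countable_carrier_Cox: "countable (carrier (Cox n))"
  unfolding carrier_Cox by (intro countable_image countable_lists) auto

section \<open>The action of the universal Coxeter group on a premaniplex\<close>

lemma word_act_Nil [simp]: "word_act adj [] x = x"
  by (simp add: word_act_def)

lemma word_act_Cons [simp]: "word_act adj (i # w) x = adj i (word_act adj w x)"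
  by (simp add: word_act_def)

lemma word_act_append: "word_act adj (u @ v) x = word_act adj u (word_act adj v x)"
  by (simp add: word_act_def)

lemma premaniplex_adj_closed: "premaniplex m F adj \<Longrightarrow> i < m \<Longrightarrow> x \<in> F \<Longrightarrow> adj i x \<in> F"
  by (simp add: premaniplex_def)

lemma word_act_closed:
  "premaniplex m F adj \<Longrightarrow> w \<in> lists {..<m} \<Longrightarrow> x \<in> F \<Longrightarrow> word_act adj w x \<in> F"
  by (induction w) (auto simp: premaniplex_adj_closed)

lemma word_act_cox_eq:
  assumes P: "premaniplex m F adj"
  shows "(u, v) \<in> cox_eq m \<Longrightarrow> x \<in> F \<Longrightarrow> word_act adj u x = word_act adj v x"
proof (induction arbitrary: x rule: cox_eq.induct)
  case (cox_inv u v i)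
  then have "word_act adj v x \<in> F" by (simp add: word_act_closed[OF P])
  with cox_inv P show ?case by (simp add: word_act_append premaniplex_def)
next
  case (cox_comm u v i j)
  then have "word_act adj v x \<in> F" by (simp add: word_act_closed[OF P])
  with cox_comm P have "adj i (adj j (adj i (adj j (word_act adj v x)))) = word_act adj v x"
    unfolding premaniplex_def by blast
  then show ?case by (simp add: word_act_append)
qed auto

lemma premaniplexI_word_act_cox_eq:
  assumes closed: "\<And>i x. i < m \<Longrightarrow> x \<in> F \<Longrightarrow> adj i x \<in> F"
    and cong: "\<And>u v x. (u, v) \<in> cox_eq m \<Longrightarrow> x \<in> F \<Longrightarrow> word_act adj u x = word_act adj v x"
  shows "premaniplex m F adj"
proof -
  have "adj i (adj i x) = x" if "i < m" "x \<in> F" for i x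
  proof -
    have "([] @ [i, i] @ [], [] @ []) \<in> cox_eq m" using that by (intro cox_eq.cox_inv) auto
    with cong that show ?thesis by fastforce
  qed
  moreover have "adj i (adj j (adj i (adj j x))) = x"
    if "i < m" "j < m" "i + 2 \<le> j \<or> j + 2 \<le> i" "x \<in> F" for i j x
  proof -
    have "([] @ [i, j, i, j] @ [], [] @ []) \<in> cox_eq m" using that by (intro cox_eq.cox_comm) auto
    with cong that show ?thesis by fastforce
  qed
  ultimately show ?thesis using closed by (simp add: premaniplex_def)
qed

lemma cox_act_cox_class:
  "premaniplex m F adj \<Longrightarrow> w \<in> lists {..<m} \<Longrightarrow> x \<in> F
   \<Longrightarrow> cox_act adj (cox_class m w) x = word_act adj w x"
  unfolding cox_act_def by (metis word_act_cox_eq cox_eq_some_member)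

lemma cox_act_closed:
  assumes "premaniplex m F adj" "A \<in> carrier (Cox m)" "x \<in> F"
  shows "cox_act adj A x \<in> F"
  using assms(2) by (rule carrier_CoxE) (use assms in \<open>simp add: cox_act_cox_class word_act_closed\<close>)

lemma cox_act_mult:
  assumes P: "premaniplex m F adj"
    and "A \<in> carrier (Cox m)" "B \<in> carrier (Cox m)" "x \<in> F"
  shows "cox_act adj (A \<otimes>\<^bsub>Cox m\<^esub> B) x = cox_act adj A (cox_act adj B x)"
proof -
  obtain u v where "u \<in> lists {..<m}" "v \<in> lists {..<m}" "A = cox_class m u" "B = cox_class m v"
    using assms by (meson carrier_CoxE)
  with assms show ?thesis
    by (simp add: mult_Cox cox_act_cox_class[OF P] word_act_closed[OF P] word_act_append)
qed

lemma cox_act_one: "premaniplex m F adj \<Longrightarrow> x \<in> F \<Longrightarrow> cox_act adj \<one>\<^bsub>Cox m\<^esub> x = x"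
  by (simp add: one_Cox cox_act_cox_class)

lemma cox_act_gen: "premaniplex m F adj \<Longrightarrow> i < m \<Longrightarrow> x \<in> F \<Longrightarrow> cox_act adj (cox_gen m i) x = adj i x"
  by (simp add: cox_gen_eq_cox_class cox_act_cox_class)

lemma pm_aut_closed: "pm_aut m F adj \<gamma> \<Longrightarrow> x \<in> F \<Longrightarrow> \<gamma> x \<in> F"
  by (auto simp: pm_aut_def bij_betw_def)

lemma pm_aut_cox_act:
  assumes \<gamma>: "pm_aut m F adj \<gamma>" and P: "premaniplex m F adj"
    and "A \<in> carrier (Cox m)" "x \<in> F"
  shows "\<gamma> (cox_act adj A x) = cox_act adj A (\<gamma> x)"
proof -
  obtain w where w: "w \<in> lists {..<m}" "A = cox_class m w"
    using assms(3) by (rule carrier_CoxE)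
  from w(1) have "\<gamma> (word_act adj w x) = word_act adj w (\<gamma> x)"
    by (induction w) (use \<gamma> \<open>x \<in> F\<close> in \<open>auto simp: pm_aut_def word_act_closed[OF P]\<close>)
  with w assms show ?thesis
    by (simp add: cox_act_cox_class[OF P] pm_aut_closed)
qed

lemma orbit_cox_act_subset:
  "premaniplex m F adj \<Longrightarrow> b \<in> F \<Longrightarrow> orbit (Cox m) (cox_act adj) b \<subseteq> F"
  by (auto simp: orbit_def cox_act_closed)

lemma connected_pm_iff_orbit_eq:
  assumes P: "premaniplex m F adj" and b: "b \<in> F"
  shows "connected_pm m F adj \<longleftrightarrow> orbit (Cox m) (cox_act adj) b = F"
proof
  assume "connected_pm m F adj"
  then have "\<exists>w\<in>lists {..<m}. p = cox_act adj (cox_class m w) b" if "p \<in> F" for p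
    using that b by (auto simp: connected_pm_def cox_act_cox_class[OF P])
  then show "orbit (Cox m) (cox_act adj) b = F"
    using orbit_cox_act_subset[OF P b] cox_class_in_carrier unfolding orbit_def by blast
next
  interpret Cox: group "Cox m" by (rule group_Cox)
  assume orbit: "orbit (Cox m) (cox_act adj) b = F"
  show "connected_pm m F adj"
    unfolding connected_pm_def
  proof (intro ballI)
    fix p q assume "p \<in> F" "q \<in> F"
    with orbit obtain A B where AB: "A \<in> carrier (Cox m)" "B \<in> carrier (Cox m)"
      "p = cox_act adj A b" "q = cox_act adj B b"
      by (auto simp: orbit_def)
    then have "B \<otimes>\<^bsub>Cox m\<^esub> inv\<^bsub>Cox m\<^esub> A \<in> carrier (Cox m)" by simp
    then obtain w where w: "w \<in> lists {..<m}" "B \<otimes>\<^bsub>Cox m\<^esub> inv\<^bsub>Cox m\<^esub> A = cox_class m w"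
      by (rule carrier_CoxE)
    have "q = cox_act adj (B \<otimes>\<^bsub>Cox m\<^esub> inv\<^bsub>Cox m\<^esub> A \<otimes>\<^bsub>Cox m\<^esub> A) b"
      using AB by (simp add: Cox.m_assoc)
    also have "\<dots> = word_act adj w p"
      using AB w b \<open>p \<in> F\<close>
      by (simp add: cox_act_mult[OF P] cox_act_cox_class[OF P] cox_class_in_carrier)
    finally show "\<exists>w\<in>lists {..<m}. q = word_act adj w p" using w(1) by blast
  qed
qed

lemma cox_act_inv_eq_iff:
  assumes P: "premaniplex m F adj" and "A \<in> carrier (Cox m)" "x \<in> F" "y \<in> F"
  shows "cox_act adj (inv\<^bsub>Cox m\<^esub> A) x = y \<longleftrightarrow> x = cox_act adj A y"
proof -
  interpret Cox: group "Cox m" by (rule group_Cox)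
  have "cox_act adj A (cox_act adj (inv\<^bsub>Cox m\<^esub> A) x) = x"
    "cox_act adj (inv\<^bsub>Cox m\<^esub> A) (cox_act adj A y) = y"
    using assms by (simp_all flip: cox_act_mult[OF P] add: cox_act_one[OF P])
  then show ?thesis by metis
qed

section \<open>Automorphisms of a connected premaniplex\<close>

lemma (in group) normalizer_iff:
  "H \<subseteq> carrier G \<Longrightarrow> g \<in> normalizer G H \<longleftrightarrow> g \<in> carrier G \<and> g <# H #> inv g = H"
  unfolding normalizer_def stabilizer_def by auto

lemma (in group) mem_conjugate_coset_iff:
  assumes "H \<subseteq> carrier G" "g \<in> carrier G"
  shows "k \<in> g <# H #> inv g \<longleftrightarrow> k \<in> carrier G \<and> inv g \<otimes> k \<otimes> g \<in> H"
proof -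
  have cancel: "x \<otimes> (inv x \<otimes> y) = y" "inv x \<otimes> (x \<otimes> y) = y"
    if "x \<in> carrier G" "y \<in> carrier G" for x y
    using that by (simp_all flip: m_assoc)
  show ?thesis
  proof
    assume "k \<in> g <# H #> inv g"
    then obtain h where "h \<in> H" "k = g \<otimes> h \<otimes> inv g"
      unfolding l_coset_def r_coset_def by auto
    with assms show "k \<in> carrier G \<and> inv g \<otimes> k \<otimes> g \<in> H"
      by (auto simp: m_assoc cancel subsetD)
  next
    assume k: "k \<in> carrier G \<and> inv g \<otimes> k \<otimes> g \<in> H"
    with assms have "k = g \<otimes> (inv g \<otimes> k \<otimes> g) \<otimes> inv g"
      by (simp add: m_assoc cancel)
    with k show "k \<in> g <# H #> inv g"
      unfolding l_coset_def r_coset_def by blast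
  qed
qed

lemma stabilizer_subset_carrier: "stabilizer G \<phi> x \<subseteq> carrier G"
  by (auto simp: stabilizer_def)

lemma cox_act_eq_iff_stabilizer:
  assumes P: "premaniplex m F adj" and "c \<in> F" "\<psi> \<in> carrier (Cox m)" "\<psi>' \<in> carrier (Cox m)"
  shows "cox_act adj \<psi> c = cox_act adj \<psi>' c
    \<longleftrightarrow> inv\<^bsub>Cox m\<^esub> \<psi> \<otimes>\<^bsub>Cox m\<^esub> \<psi>' \<in> stabilizer (Cox m) (cox_act adj) c"
proof -
  interpret Cox: group "Cox m" by (rule group_Cox)
  have "cox_act adj (inv\<^bsub>Cox m\<^esub> \<psi> \<otimes>\<^bsub>Cox m\<^esub> \<psi>') c = c
      \<longleftrightarrow> cox_act adj (inv\<^bsub>Cox m\<^esub> \<psi>) (cox_act adj \<psi>' c) = c"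
    using assms by (simp add: cox_act_mult[OF P])
  also have "\<dots> \<longleftrightarrow> cox_act adj \<psi>' c = cox_act adj \<psi> c"
    using assms by (intro cox_act_inv_eq_iff[OF P]) (simp_all add: cox_act_closed[OF P])
  finally show ?thesis
    using assms by (auto simp: stabilizer_def)
qed

lemma stabilizer_cox_act:
  assumes P: "premaniplex m F adj" and b: "b \<in> F" and g: "g \<in> carrier (Cox m)"
  shows "stabilizer (Cox m) (cox_act adj) (cox_act adj g b)
    = g <#\<^bsub>Cox m\<^esub> stabilizer (Cox m) (cox_act adj) b #>\<^bsub>Cox m\<^esub> inv\<^bsub>Cox m\<^esub> g"
proof -
  interpret Cox: group "Cox m" by (rule group_Cox)
  have "cox_act adj k (cox_act adj g b) = cox_act adj g b
      \<longleftrightarrow> inv\<^bsub>Cox m\<^esub> g \<otimes>\<^bsub>Cox m\<^esub> k \<otimes>\<^bsub>Cox m\<^esub> g \<in> stabilizer (Cox m) (cox_act adj) b"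
    if "k \<in> carrier (Cox m)" for k
    using cox_act_eq_iff_stabilizer[OF P b g, of "k \<otimes>\<^bsub>Cox m\<^esub> g"] that g b
    by (simp add: cox_act_mult[OF P] Cox.m_assoc eq_commute)
  then show ?thesis
    using g by (auto simp: Cox.mem_conjugate_coset_iff stabilizer_subset_carrier) (auto simp: stabilizer_def)
qed

lemma normalizer_stabilizer_iff:
  assumes "premaniplex m F adj" "b \<in> F"
  shows "g \<in> normalizer (Cox m) (stabilizer (Cox m) (cox_act adj) b)
    \<longleftrightarrow> g \<in> carrier (Cox m)
        \<and> stabilizer (Cox m) (cox_act adj) (cox_act adj g b) = stabilizer (Cox m) (cox_act adj) b"
proof -
  have "g \<in> normalizer (Cox m) (stabilizer (Cox m) (cox_act adj) b)
    \<longleftrightarrow> g \<in> carrier (Cox m) \<and> g <#\<^bsub>Cox m\<^esub> stabilizer (Cox m) (cox_act adj) b #>\<^bsub>Cox m\<^esub> inv\<^bsub>Cox m\<^esub> g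
                              = stabilizer (Cox m) (cox_act adj) b"
    by (rule group.normalizer_iff[OF group_Cox stabilizer_subset_carrier])
  then show ?thesis
    using stabilizer_cox_act[OF assms] by auto
qed

lemma stabilizer_pm_aut:
  assumes \<gamma>: "pm_aut m F adj \<gamma>" and P: "premaniplex m F adj" and b: "b \<in> F"
  shows "stabilizer (Cox m) (cox_act adj) (\<gamma> b) = stabilizer (Cox m) (cox_act adj) b"
proof -
  have "cox_act adj k (\<gamma> b) = \<gamma> b \<longleftrightarrow> cox_act adj k b = b" if "k \<in> carrier (Cox m)" for k
  proof -
    have "inj_on \<gamma> F" using \<gamma> by (simp add: pm_aut_def bij_betw_def)
    moreover have "cox_act adj k (\<gamma> b) = \<gamma> (cox_act adj k b)"
      using pm_aut_cox_act[OF \<gamma> P that b] by simp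
    ultimately show ?thesis
      using that b by (simp add: inj_on_eq_iff cox_act_closed[OF P])
  qed
  then show ?thesis by (auto simp: stabilizer_def)
qed

lemma cox_act_eq_iff_if_stabilizer_eq:
  assumes P: "premaniplex m F adj" and "b \<in> F" "c \<in> F"
    and "stabilizer (Cox m) (cox_act adj) c = stabilizer (Cox m) (cox_act adj) b"
    and "\<psi> \<in> carrier (Cox m)" "\<psi>' \<in> carrier (Cox m)"
  shows "cox_act adj \<psi> c = cox_act adj \<psi>' c \<longleftrightarrow> cox_act adj \<psi> b = cox_act adj \<psi>' b"
  using assms by (simp add: cox_act_eq_iff_stabilizer[OF P])

lemma pm_aut_if_stabilizer_eq:
  assumes P: "premaniplex m F adj" and conn: "connected_pm m F adj" and b: "b \<in> F" and c: "c \<in> F"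
    and stab: "stabilizer (Cox m) (cox_act adj) c = stabilizer (Cox m) (cox_act adj) b"
    and \<gamma>_act: "\<And>\<psi>. \<psi> \<in> carrier (Cox m) \<Longrightarrow> \<gamma> (cox_act adj \<psi> b) = cox_act adj \<psi> c"
  shows "pm_aut m F adj \<gamma>"
proof -
  interpret Cox: group "Cox m" by (rule group_Cox)
  have orbit_b: "orbit (Cox m) (cox_act adj) b = F" and orbit_c: "orbit (Cox m) (cox_act adj) c = F"
    using conn b c connected_pm_iff_orbit_eq[OF P] by blast+
  have "inj_on \<gamma> F"
  proof (rule inj_onI)
    fix p q assume "p \<in> F" "q \<in> F" "\<gamma> p = \<gamma> q"
    moreover from \<open>p \<in> F\<close> \<open>q \<in> F\<close> obtain \<psi> \<psi>' where "\<psi> \<in> carrier (Cox m)" "p = cox_act adj \<psi> b"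
      "\<psi>' \<in> carrier (Cox m)" "q = cox_act adj \<psi>' b"
      using orbit_b unfolding orbit_def by blast
    ultimately show "p = q"
      using \<gamma>_act cox_act_eq_iff_if_stabilizer_eq[OF P b c stab] by metis
  qed
  moreover have "\<gamma> ` orbit (Cox m) (cox_act adj) b = orbit (Cox m) (cox_act adj) c"
    using \<gamma>_act unfolding orbit_def by force
  then have "\<gamma> ` F = F" by (simp only: orbit_b orbit_c)
  moreover have "\<gamma> (adj i p) = adj i (\<gamma> p)" if "p \<in> F" "i < m" for p i
  proof -
    obtain \<psi> where \<psi>: "\<psi> \<in> carrier (Cox m)" "p = cox_act adj \<psi> b"
      using \<open>p \<in> F\<close> orbit_b unfolding orbit_def by blast
    have gen: "cox_gen m i \<in> carrier (Cox m)" using \<open>i < m\<close> by (rule cox_gen_in_carrier)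
    have "\<gamma> (adj i p) = \<gamma> (cox_act adj (cox_gen m i \<otimes>\<^bsub>Cox m\<^esub> \<psi>) b)"
      using \<psi> gen b \<open>i < m\<close> \<open>p \<in> F\<close> by (simp add: cox_act_mult[OF P] cox_act_gen[OF P])
    also have "\<dots> = cox_act adj (cox_gen m i \<otimes>\<^bsub>Cox m\<^esub> \<psi>) c"
      using \<psi> gen by (simp add: \<gamma>_act)
    also have "\<dots> = adj i (\<gamma> p)"
      using \<psi> gen c \<open>i < m\<close>
      by (simp add: \<gamma>_act cox_act_mult[OF P] cox_act_gen[OF P] cox_act_closed[OF P])
    finally show ?thesis .
  qed
  ultimately show ?thesis unfolding pm_aut_def bij_betw_def by blast
qed

lemma ex_pm_aut_if_stabilizer_eq:
  assumes P: "premaniplex m F adj" and conn: "connected_pm m F adj" and b: "b \<in> F" and c: "c \<in> F"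
    and stab: "stabilizer (Cox m) (cox_act adj) c = stabilizer (Cox m) (cox_act adj) b"
  shows "\<exists>\<gamma>. pm_aut m F adj \<gamma> \<and> \<gamma> b = c"
proof -
  interpret Cox: group "Cox m" by (rule group_Cox)
  define \<gamma> where "\<gamma> p = cox_act adj (SOME \<psi>. \<psi> \<in> carrier (Cox m) \<and> p = cox_act adj \<psi> b) c" for p
  have \<gamma>_act: "\<gamma> (cox_act adj \<psi> b) = cox_act adj \<psi> c" if "\<psi> \<in> carrier (Cox m)" for \<psi>
  proof -
    let ?\<psi>' = "SOME \<psi>'. \<psi>' \<in> carrier (Cox m) \<and> cox_act adj \<psi> b = cox_act adj \<psi>' b"
    have "\<exists>\<psi>'. \<psi>' \<in> carrier (Cox m) \<and> cox_act adj \<psi> b = cox_act adj \<psi>' b" using that by blast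
    then have "?\<psi>' \<in> carrier (Cox m) \<and> cox_act adj \<psi> b = cox_act adj ?\<psi>' b" by (rule someI_ex)
    then show ?thesis
      using that cox_act_eq_iff_if_stabilizer_eq[OF P b c stab] unfolding \<gamma>_def by metis
  qed
  have "pm_aut m F adj \<gamma>" by (rule pm_aut_if_stabilizer_eq[OF P conn b c stab \<gamma>_act])
  moreover have "\<gamma> b = c"
    using \<gamma>_act[of "\<one>\<^bsub>Cox m\<^esub>"] b c by (simp add: cox_act_one[OF P])
  ultimately show ?thesis by blast
qed

lemma normalizer_stabilizer_iff_ex_pm_aut:
  assumes P: "premaniplex m F adj" and conn: "connected_pm m F adj" and b: "b \<in> F"
  shows "g \<in> normalizer (Cox m) (stabilizer (Cox m) (cox_act adj) b)
    \<longleftrightarrow> g \<in> carrier (Cox m) \<and> (\<exists>\<gamma>. pm_aut m F adj \<gamma> \<and> \<gamma> b = cox_act adj g b)"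
  using normalizer_stabilizer_iff[OF P b] ex_pm_aut_if_stabilizer_eq[OF P conn b]
    stabilizer_pm_aut[OF _ P b] cox_act_closed[OF P _ b]
  by metis

section \<open>Voltage operators\<close>

lemma voltage_operator_premaniplex: "voltage_operator n m FY adjY eta \<Longrightarrow> premaniplex m FY adjY"
  by (simp add: voltage_operator_def)

lemma voltage_closed:
  "voltage_operator n m FY adjY eta \<Longrightarrow> y \<in> FY \<Longrightarrow> \<omega> \<in> carrier (Cox m)
   \<Longrightarrow> eta y \<omega> \<in> carrier (Cox n)"
  by (simp add: voltage_operator_def voltage_assignment_def)

lemma voltage_mult:
  "voltage_operator n m FY adjY eta \<Longrightarrow> y \<in> FY \<Longrightarrow> \<omega> \<in> carrier (Cox m) \<Longrightarrow> \<psi> \<in> carrier (Cox m)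
   \<Longrightarrow> eta y (\<psi> \<otimes>\<^bsub>Cox m\<^esub> \<omega>) = eta (cox_act adjY \<omega> y) \<psi> \<otimes>\<^bsub>Cox n\<^esub> eta y \<omega>"
  by (simp add: voltage_operator_def voltage_assignment_def)

lemma voltage_one:
  assumes V: "voltage_operator n m FY adjY eta" and y: "y \<in> FY"
  shows "eta y \<one>\<^bsub>Cox m\<^esub> = \<one>\<^bsub>Cox n\<^esub>"
proof -
  interpret Cox_n: group "Cox n" by (rule group_Cox)
  interpret Cox_m: group "Cox m" by (rule group_Cox)
  have "eta y \<one>\<^bsub>Cox m\<^esub> \<in> carrier (Cox n)" using voltage_closed[OF V y] by simp
  moreover have "eta y \<one>\<^bsub>Cox m\<^esub> = eta y \<one>\<^bsub>Cox m\<^esub> \<otimes>\<^bsub>Cox n\<^esub> eta y \<one>\<^bsub>Cox m\<^esub>"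
    using voltage_mult[OF V y Cox_m.one_closed Cox_m.one_closed]
      cox_act_one[OF voltage_operator_premaniplex[OF V] y]
    by simp
  ultimately show ?thesis using Cox_n.l_cancel_one' by metis
qed

lemma vprod_adj_Pair:
  "vprod_adj m adjX eta adjY i (x, y) = (cox_act adjX (eta y (cox_gen m i)) x, adjY i y)"
  by (simp add: vprod_adj_def)

lemma word_act_vprod_adj:
  assumes X: "premaniplex n FX adjX" and V: "voltage_operator n m FY adjY eta"
    and x: "x \<in> FX" and y: "y \<in> FY"
  shows "w \<in> lists {..<m} \<Longrightarrow> word_act (vprod_adj m adjX eta adjY) w (x, y)
    = (cox_act adjX (eta y (cox_class m w)) x, word_act adjY w y)"
proof (induction w)
  case Nil
  show ?case
    using voltage_one[OF V y] x by (simp add: cox_act_one[OF X] flip: one_Cox)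
next
  case (Cons i w)
  have Y: "premaniplex m FY adjY" by (rule voltage_operator_premaniplex[OF V])
  have i: "i < m" and w: "w \<in> lists {..<m}" using Cons.prems by auto
  have "eta y (cox_class m (i # w))
      = eta (word_act adjY w y) (cox_gen m i) \<otimes>\<^bsub>Cox n\<^esub> eta y (cox_class m w)"
    using i w y
    by (simp add: cox_class_Cons voltage_mult[OF V] cox_class_in_carrier cox_gen_in_carrier
        cox_act_cox_class[OF Y])
  then have "cox_act adjX (eta y (cox_class m (i # w))) x
      = cox_act adjX (eta (word_act adjY w y) (cox_gen m i)) (cox_act adjX (eta y (cox_class m w)) x)"
    using i w x y
    by (simp add: cox_act_mult[OF X] voltage_closed[OF V] word_act_closed[OF Y]
        cox_class_in_carrier cox_gen_in_carrier)
  moreover have "word_act (vprod_adj m adjX eta adjY) (i # w) (x, y)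
      = vprod_adj m adjX eta adjY i (cox_act adjX (eta y (cox_class m w)) x, word_act adjY w y)"
    using Cons.IH[OF w] by simp
  ultimately show ?case by (simp add: vprod_adj_Pair)
qed

lemma premaniplex_vprod:
  assumes X: "premaniplex n FX adjX" and V: "voltage_operator n m FY adjY eta"
  shows "premaniplex m (vprod_flags FX FY) (vprod_adj m adjX eta adjY)"
proof (rule premaniplexI_word_act_cox_eq)
  have Y: "premaniplex m FY adjY" by (rule voltage_operator_premaniplex[OF V])
  show "vprod_adj m adjX eta adjY i p \<in> vprod_flags FX FY" if "i < m" "p \<in> vprod_flags FX FY" for i p
    using that
    by (auto simp: vprod_flags_def vprod_adj_Pair cox_act_closed[OF X] voltage_closed[OF V]
        cox_gen_in_carrier premaniplex_adj_closed[OF Y])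
  show "word_act (vprod_adj m adjX eta adjY) u p = word_act (vprod_adj m adjX eta adjY) v p"
    if uv: "(u, v) \<in> cox_eq m" and p: "p \<in> vprod_flags FX FY" for u v p
  proof -
    obtain x y where xy: "p = (x, y)" "x \<in> FX" "y \<in> FY" using p by (auto simp: vprod_flags_def)
    have "u \<in> lists {..<m}" "v \<in> lists {..<m}" using cox_eq_in_lists[OF uv] by auto
    moreover from this have "cox_class m u = cox_class m v" using uv by (simp add: cox_class_eq_iff)
    ultimately show ?thesis
      using uv xy by (simp add: word_act_vprod_adj[OF X V] word_act_cox_eq[OF Y])
  qed
qed

lemma cox_act_vprod:
  assumes X: "premaniplex n FX adjX" and V: "voltage_operator n m FY adjY eta"
    and "x \<in> FX" "y \<in> FY" "\<omega> \<in> carrier (Cox m)"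
  shows "cox_act (vprod_adj m adjX eta adjY) \<omega> (x, y) = (cox_act adjX (eta y \<omega>) x, cox_act adjY \<omega> y)"
proof -
  obtain w where "w \<in> lists {..<m}" "\<omega> = cox_class m w"
    using assms(5) by (rule carrier_CoxE)
  with assms show ?thesis
    by (simp add: cox_act_cox_class[OF premaniplex_vprod[OF X V]] vprod_flags_def
        word_act_vprod_adj[OF X V] cox_act_cox_class[OF voltage_operator_premaniplex[OF V]])
qed

lemma stabilizer_vprod:
  assumes X: "premaniplex n FX adjX" and V: "voltage_operator n m FY adjY eta"
    and x0: "x0 \<in> FX" and y0: "y0 \<in> FY"
  shows "stabilizer (Cox m) (cox_act (vprod_adj m adjX eta adjY)) (x0, y0)
    = {\<omega> \<in> stabilizer (Cox m) (cox_act adjY) y0. eta y0 \<omega> \<in> stabilizer (Cox n) (cox_act adjX) x0}"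
  using x0 y0 by (auto simp: stabilizer_def cox_act_vprod[OF X V] voltage_closed[OF V])

lemma connected_vprod:
  assumes X: "premaniplex n FX adjX" and X_conn: "connected_pm n FX adjX" and x0: "x0 \<in> FX"
    and V: "voltage_operator n m FY adjY eta" and Y_conn: "connected_pm m FY adjY" and y0: "y0 \<in> FY"
    and surj: "carrier (Cox n) \<subseteq> eta y0 ` stabilizer (Cox m) (cox_act adjY) y0"
  shows "connected_pm m (vprod_flags FX FY) (vprod_adj m adjX eta adjY)"
proof -
  interpret Cox_n: group "Cox n" by (rule group_Cox)
  interpret Cox_m: group "Cox m" by (rule group_Cox)
  have Y: "premaniplex m FY adjY" by (rule voltage_operator_premaniplex[OF V])
  have "(x, y) \<in> orbit (Cox m) (cox_act (vprod_adj m adjX eta adjY)) (x0, y0)"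
    if x: "x \<in> FX" and y: "y \<in> FY" for x y
  proof -
    obtain \<psi> where \<psi>: "\<psi> \<in> carrier (Cox m)" "y = cox_act adjY \<psi> y0"
      using Y_conn y y0 by (auto simp: connected_pm_iff_orbit_eq[OF Y y0] orbit_def)
    define e where "e = eta y0 \<psi>"
    have e: "e \<in> carrier (Cox n)" using voltage_closed[OF V y0 \<psi>(1)] by (simp add: e_def)
    \<comment> \<open>Lift \<open>\<psi>\<close>, then correct the first coordinate inside the fibre over \<open>y0\<close>.\<close>
    obtain h where h: "h \<in> carrier (Cox n)" "cox_act adjX (inv\<^bsub>Cox n\<^esub> e) x = cox_act adjX h x0"
      using X_conn x0 cox_act_closed[OF X _ x] e
      by (auto simp: connected_pm_iff_orbit_eq[OF X x0] orbit_def)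
    then obtain \<phi> where \<phi>: "\<phi> \<in> stabilizer (Cox m) (cox_act adjY) y0" "eta y0 \<phi> = h"
      using surj by blast
    then have \<phi>_carrier: "\<phi> \<in> carrier (Cox m)" by (simp add: stabilizer_def)
    have "eta y0 (\<psi> \<otimes>\<^bsub>Cox m\<^esub> \<phi>) = e \<otimes>\<^bsub>Cox n\<^esub> h"
      using \<phi> \<psi> y0 by (simp add: voltage_mult[OF V] e_def stabilizer_def)
    then have "cox_act (vprod_adj m adjX eta adjY) (\<psi> \<otimes>\<^bsub>Cox m\<^esub> \<phi>) (x0, y0) = (x, y)"
      using \<phi> \<phi>_carrier \<psi> h e x x0 y0
      by (simp add: cox_act_vprod[OF X V] cox_act_mult[OF X] cox_act_mult[OF Y] stabilizer_def
          cox_act_inv_eq_iff[OF X] cox_act_closed[OF X])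
    moreover have "\<psi> \<otimes>\<^bsub>Cox m\<^esub> \<phi> \<in> carrier (Cox m)" using \<phi>_carrier \<psi>(1) by simp
    ultimately show ?thesis unfolding orbit_def by force
  qed
  moreover have "orbit (Cox m) (cox_act (vprod_adj m adjX eta adjY)) (x0, y0) \<subseteq> vprod_flags FX FY"
    using x0 y0 by (intro orbit_cox_act_subset[OF premaniplex_vprod[OF X V]]) (simp add: vprod_flags_def)
  ultimately have "orbit (Cox m) (cox_act (vprod_adj m adjX eta adjY)) (x0, y0) = vprod_flags FX FY"
    by (auto simp: vprod_flags_def)
  moreover have "(x0, y0) \<in> vprod_flags FX FY" using x0 y0 by (simp add: vprod_flags_def)
  ultimately show ?thesis using connected_pm_iff_orbit_eq[OF premaniplex_vprod[OF X V]] by blast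
qed

section \<open>The universal premaniplex\<close>

text \<open>The Cayley graph of \<open>C\<^sup>n\<close> (the generator \<open>r\<^sub>i\<close> acting by left multiplication),
  with flags encoded as natural numbers because \<^const>\<open>preserves_connectivity\<close> only
  quantifies over premaniplexes on \<^typ>\<open>nat\<close>.\<close>

definition univ_code :: "nat \<Rightarrow> nat list set \<Rightarrow> nat" where
  "univ_code n = to_nat_on (carrier (Cox n))"

definition univ_flags :: "nat \<Rightarrow> nat set" where
  "univ_flags n = univ_code n ` carrier (Cox n)"

definition univ_adj :: "nat \<Rightarrow> nat \<Rightarrow> nat \<Rightarrow> nat" where
  "univ_adj n i k = univ_code n (cox_gen n i \<otimes>\<^bsub>Cox n\<^esub> from_nat_into (carrier (Cox n)) k)"

lemma inj_on_univ_code: "inj_on (univ_code n) (carrier (Cox n))"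
  unfolding univ_code_def by (rule inj_on_to_nat_on[OF countable_carrier_Cox])

lemma from_nat_into_univ_code:
  "A \<in> carrier (Cox n) \<Longrightarrow> from_nat_into (carrier (Cox n)) (univ_code n A) = A"
  unfolding univ_code_def by (rule from_nat_into_to_nat_on[OF countable_carrier_Cox])

lemma word_act_univ_adj:
  assumes "w \<in> lists {..<n}" "A \<in> carrier (Cox n)"
  shows "word_act (univ_adj n) w (univ_code n A) = univ_code n (cox_class n w \<otimes>\<^bsub>Cox n\<^esub> A)"
proof -
  interpret Cox: group "Cox n" by (rule group_Cox)
  from assms(1) show ?thesis
  proof (induction w)
    case Nil
    show ?case using assms(2) by (simp flip: one_Cox)
  next
    case (Cons i w)
    then show ?case
      using assms(2) by (simp add: univ_adj_def from_nat_into_univ_code cox_class_Cons Cox.m_assoc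
          cox_class_in_carrier cox_gen_in_carrier)
  qed
qed

lemma premaniplex_univ: "premaniplex n (univ_flags n) (univ_adj n)"
proof (rule premaniplexI_word_act_cox_eq)
  interpret Cox: group "Cox n" by (rule group_Cox)
  show "univ_adj n i k \<in> univ_flags n" if "i < n" "k \<in> univ_flags n" for i k
    using that by (auto simp: univ_flags_def univ_adj_def from_nat_into_univ_code cox_gen_in_carrier)
  show "word_act (univ_adj n) u k = word_act (univ_adj n) v k"
    if uv: "(u, v) \<in> cox_eq n" and "k \<in> univ_flags n" for u v k
  proof -
    have "u \<in> lists {..<n}" "v \<in> lists {..<n}" using cox_eq_in_lists[OF uv] by auto
    moreover from this have "cox_class n u = cox_class n v" using uv by (simp add: cox_class_eq_iff)
    moreover obtain A where "A \<in> carrier (Cox n)" "k = univ_code n A"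
      using \<open>k \<in> univ_flags n\<close> by (auto simp: univ_flags_def)
    ultimately show ?thesis by (simp add: word_act_univ_adj)
  qed
qed

lemma cox_act_univ_adj:
  assumes "A \<in> carrier (Cox n)" "B \<in> carrier (Cox n)"
  shows "cox_act (univ_adj n) A (univ_code n B) = univ_code n (A \<otimes>\<^bsub>Cox n\<^esub> B)"
proof -
  obtain w where "w \<in> lists {..<n}" "A = cox_class n w" using assms(1) by (rule carrier_CoxE)
  moreover have "univ_code n B \<in> univ_flags n" using assms(2) by (simp add: univ_flags_def)
  ultimately show ?thesis
    using assms(2) by (simp add: cox_act_cox_class[OF premaniplex_univ] word_act_univ_adj)
qed

lemma connected_univ: "connected_pm n (univ_flags n) (univ_adj n)"
proof -
  interpret Cox: group "Cox n" by (rule group_Cox)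
  have "univ_code n \<one>\<^bsub>Cox n\<^esub> \<in> univ_flags n" by (simp add: univ_flags_def)
  moreover have "orbit (Cox n) (cox_act (univ_adj n)) (univ_code n \<one>\<^bsub>Cox n\<^esub>) = univ_flags n"
    unfolding orbit_def univ_flags_def by (force simp: cox_act_univ_adj)
  ultimately show ?thesis by (simp add: connected_pm_iff_orbit_eq[OF premaniplex_univ])
qed

lemma preserves_connectivity_imp_voltage_onto:
  assumes V: "voltage_operator n m FY adjY eta" and pc: "preserves_connectivity n m FY adjY eta"
    and y0: "y0 \<in> FY"
  shows "carrier (Cox n) \<subseteq> eta y0 ` stabilizer (Cox m) (cox_act adjY) y0"
proof
  interpret Cox: group "Cox n" by (rule group_Cox)
  fix g assume g: "g \<in> carrier (Cox n)"
  let ?P = "vprod_adj m (univ_adj n) eta adjY"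
  have P: "premaniplex m (vprod_flags (univ_flags n) FY) ?P"
    by (rule premaniplex_vprod[OF premaniplex_univ V])
  have b: "(univ_code n \<one>\<^bsub>Cox n\<^esub>, y0) \<in> vprod_flags (univ_flags n) FY"
    using y0 by (simp add: vprod_flags_def univ_flags_def)
  have "connected_pm m (vprod_flags (univ_flags n) FY) ?P"
    using pc premaniplex_univ connected_univ unfolding preserves_connectivity_def by blast
  then have "(univ_code n g, y0) \<in> orbit (Cox m) (cox_act ?P) (univ_code n \<one>\<^bsub>Cox n\<^esub>, y0)"
    using g y0 connected_pm_iff_orbit_eq[OF P b] by (auto simp: vprod_flags_def univ_flags_def)
  then obtain \<omega> where \<omega>: "\<omega> \<in> carrier (Cox m)"
    "(univ_code n g, y0) = cox_act ?P \<omega> (univ_code n \<one>\<^bsub>Cox n\<^esub>, y0)"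
    by (auto simp: orbit_def)
  then have "univ_code n g = univ_code n (eta y0 \<omega>)" "cox_act adjY \<omega> y0 = y0"
    using y0 voltage_closed[OF V y0 \<omega>(1)]
    by (simp_all add: cox_act_vprod[OF premaniplex_univ V] univ_flags_def cox_act_univ_adj)
  moreover have "g = eta y0 \<omega>"
    using calculation(1) g voltage_closed[OF V y0 \<omega>(1)] inj_on_univ_code by (metis inj_onD)
  ultimately show "g \<in> eta y0 ` stabilizer (Cox m) (cox_act adjY) y0"
    using \<omega>(1) by (auto simp: stabilizer_def)
qed

section \<open>Automorphisms of voltage products\<close>

lemma snd_pm_aut_vprod:
  assumes X: "premaniplex n FX adjX" and V: "voltage_operator n m FY adjY eta"
    and conn: "connected_pm m (vprod_flags FX FY) (vprod_adj m adjX eta adjY)"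
    and x0: "x0 \<in> FX" and y0: "y0 \<in> FY"
    and \<gamma>: "pm_aut m (vprod_flags FX FY) (vprod_adj m adjX eta adjY) \<gamma>"
    and base: "snd (\<gamma> (x0, y0)) = y0"
    and x: "x \<in> FX" and y: "y \<in> FY"
  shows "snd (\<gamma> (x, y)) = y"
proof -
  have P: "premaniplex m (vprod_flags FX FY) (vprod_adj m adjX eta adjY)"
    by (rule premaniplex_vprod[OF X V])
  have b: "(x0, y0) \<in> vprod_flags FX FY" using x0 y0 by (simp add: vprod_flags_def)
  have "orbit (Cox m) (cox_act (vprod_adj m adjX eta adjY)) (x0, y0) = vprod_flags FX FY"
    using conn connected_pm_iff_orbit_eq[OF P b] by blast
  then have "(x, y) \<in> orbit (Cox m) (cox_act (vprod_adj m adjX eta adjY)) (x0, y0)"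
    using x y by (simp add: vprod_flags_def)
  then obtain A where A: "A \<in> carrier (Cox m)" "(x, y) = cox_act (vprod_adj m adjX eta adjY) A (x0, y0)"
    by (auto simp: orbit_def)
  obtain x1 where x1: "\<gamma> (x0, y0) = (x1, y0)" "x1 \<in> FX"
    using pm_aut_closed[OF \<gamma> b] base by (cases "\<gamma> (x0, y0)") (auto simp: vprod_flags_def)
  have "\<gamma> (x, y) = cox_act (vprod_adj m adjX eta adjY) A (x1, y0)"
    using A b x1 by (simp add: pm_aut_cox_act[OF \<gamma> P])
  with A x0 x1 y0 show ?thesis by (simp add: cox_act_vprod[OF X V])
qed

lemma fst_pm_aut_vprod_eq:
  assumes X: "premaniplex n FX adjX" and V: "voltage_operator n m FY adjY eta"
    and tree: "trivial_tree_convention n m FY adjY eta"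
    and \<gamma>: "pm_aut m (vprod_flags FX FY) (vprod_adj m adjX eta adjY) \<gamma>"
    and snd_fixed: "\<And>x y. x \<in> FX \<Longrightarrow> y \<in> FY \<Longrightarrow> snd (\<gamma> (x, y)) = y"
    and x: "x \<in> FX" and y: "y \<in> FY" and y': "y' \<in> FY"
  shows "fst (\<gamma> (x, y)) = fst (\<gamma> (x, y'))"
proof -
  obtain T where T: "spanning_tree m FY adjY T" and trivial: "\<forall>(y, i)\<in>T. eta y (cox_gen m i) = \<one>\<^bsub>Cox n\<^esub>"
    using tree unfolding trivial_tree_convention_def by blast
  have T_dart: "y \<in> FY \<and> i < m" if "(y, i) \<in> T" for y i
    using T that unfolding spanning_tree_def by blast
  have \<gamma>_closed: "fst (\<gamma> (x, y)) \<in> FX" if "x \<in> FX" "y \<in> FY" for x y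
    using pm_aut_closed[OF \<gamma>, of "(x, y)"] that by (auto simp: vprod_flags_def)
  have tree_step: "fst (\<gamma> (x, adjY i y)) = fst (\<gamma> (x, y))" if "x \<in> FX" "(y, i) \<in> T" for x y i
  proof -
    have "y \<in> FY" "i < m" using T_dart[OF \<open>(y, i) \<in> T\<close>] by auto
    have lift: "vprod_adj m adjX eta adjY i (x', y) = (x', adjY i y)" if "x' \<in> FX" for x'
      using trivial \<open>(y, i) \<in> T\<close> that by (auto simp: vprod_adj_Pair cox_act_one[OF X])
    have "\<gamma> (x, adjY i y) = \<gamma> (vprod_adj m adjX eta adjY i (x, y))"
      using lift[OF \<open>x \<in> FX\<close>] by simp
    also have "\<dots> = vprod_adj m adjX eta adjY i (\<gamma> (x, y))"
      using \<gamma> \<open>x \<in> FX\<close> \<open>y \<in> FY\<close> \<open>i < m\<close> by (simp add: pm_aut_def vprod_flags_def)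
    also have "\<dots> = vprod_adj m adjX eta adjY i (fst (\<gamma> (x, y)), y)"
      using snd_fixed[OF \<open>x \<in> FX\<close> \<open>y \<in> FY\<close>] by (metis prod.collapse)
    also have "\<dots> = (fst (\<gamma> (x, y)), adjY i y)"
      using \<gamma>_closed[OF \<open>x \<in> FX\<close> \<open>y \<in> FY\<close>] by (rule lift)
    finally show ?thesis by simp
  qed
  have tree_walk: "fst (\<gamma> (x, walk_end adjY z ws)) = fst (\<gamma> (x, z))" if "tree_walk T adjY z ws" for z ws
    using that
  proof (induction ws arbitrary: z)
    case (Cons i ws)
    then show ?case using tree_step[OF x] by (simp add: walk_end_def)
  qed (simp add: walk_end_def)
  obtain ws where "tree_walk T adjY y ws" "walk_end adjY y ws = y'"
    using T y y' unfolding spanning_tree_def by blast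
  then show ?thesis using tree_walk by metis
qed

lemma bij_betw_fst_if_bij_betw_Times:
  assumes bij: "bij_betw \<gamma> (A \<times> B) (A \<times> B)" and b: "b \<in> B"
    and \<gamma>_eq: "\<And>x y. x \<in> A \<Longrightarrow> y \<in> B \<Longrightarrow> \<gamma> (x, y) = (\<alpha> x, y)"
  shows "bij_betw \<alpha> A A"
proof (rule bij_betw_imageI)
  show "inj_on \<alpha> A"
  proof (rule inj_onI)
    fix x x' assume "x \<in> A" "x' \<in> A" "\<alpha> x = \<alpha> x'"
    then have "\<gamma> (x, b) = \<gamma> (x', b)" using \<gamma>_eq b by simp
    moreover have "inj_on \<gamma> (A \<times> B)" using bij by (simp add: bij_betw_def)
    ultimately show "x = x'" using \<open>x \<in> A\<close> \<open>x' \<in> A\<close> b by (simp add: inj_on_eq_iff)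
  qed
  show "\<alpha> ` A = A"
  proof
    show "\<alpha> ` A \<subseteq> A"
    proof
      fix x' assume "x' \<in> \<alpha> ` A"
      then obtain x where "x \<in> A" "x' = \<alpha> x" by blast
      then have "(x', b) \<in> \<gamma> ` (A \<times> B)" using \<gamma>_eq b by force
      then show "x' \<in> A" using bij by (simp add: bij_betw_def)
    qed
    show "A \<subseteq> \<alpha> ` A"
    proof
      fix x' assume "x' \<in> A"
      then have "(x', b) \<in> \<gamma> ` (A \<times> B)" using bij b by (simp add: bij_betw_def)
      then obtain x y where "x \<in> A" "y \<in> B" "(x', b) = \<gamma> (x, y)" by auto
      then show "x' \<in> \<alpha> ` A" using \<gamma>_eq by simp
    qed
  qed
qed

lemma fst_pm_aut_vprod_adj:
  assumes X: "premaniplex n FX adjX" and V: "voltage_operator n m FY adjY eta" and y0: "y0 \<in> FY"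
    and \<gamma>: "pm_aut m (vprod_flags FX FY) (vprod_adj m adjX eta adjY) \<gamma>"
    and \<gamma>_eq: "\<And>x y. x \<in> FX \<Longrightarrow> y \<in> FY \<Longrightarrow> \<gamma> (x, y) = (\<alpha> x, y)"
    and gen: "cox_gen n j \<in> eta y0 ` stabilizer (Cox m) (cox_act adjY) y0" and j: "j < n"
    and x: "x \<in> FX"
  shows "\<alpha> (adjX j x) = adjX j (\<alpha> x)"
proof -
  have P: "premaniplex m (vprod_flags FX FY) (vprod_adj m adjX eta adjY)"
    by (rule premaniplex_vprod[OF X V])
  obtain \<phi> where \<phi>: "\<phi> \<in> carrier (Cox m)" "cox_act adjY \<phi> y0 = y0" "eta y0 \<phi> = cox_gen n j"
    using gen by (auto simp: stabilizer_def)
  have lift: "cox_act (vprod_adj m adjX eta adjY) \<phi> (x', y0) = (adjX j x', y0)" if "x' \<in> FX" for x'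
    using \<phi> that y0 j by (simp add: cox_act_vprod[OF X V] cox_act_gen[OF X])
  have "\<alpha> x \<in> FX" using pm_aut_closed[OF \<gamma>, of "(x, y0)"] x y0 \<gamma>_eq by (simp add: vprod_flags_def)
  moreover have "adjX j x \<in> FX" using X j x by (rule premaniplex_adj_closed)
  moreover have "\<gamma> (cox_act (vprod_adj m adjX eta adjY) \<phi> (x, y0))
      = cox_act (vprod_adj m adjX eta adjY) \<phi> (\<gamma> (x, y0))"
    using \<phi> x y0 by (simp add: pm_aut_cox_act[OF \<gamma> P] vprod_flags_def)
  ultimately show ?thesis
    using x y0 by (simp add: lift \<gamma>_eq)
qed

lemma induced_by_X_if_snd_fixed:
  assumes X: "premaniplex n FX adjX" and V: "voltage_operator n m FY adjY eta"
    and tree: "trivial_tree_convention n m FY adjY eta" and y0: "y0 \<in> FY"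
    and gens: "\<And>j. j < n \<Longrightarrow> cox_gen n j \<in> eta y0 ` stabilizer (Cox m) (cox_act adjY) y0"
    and \<gamma>: "pm_aut m (vprod_flags FX FY) (vprod_adj m adjX eta adjY) \<gamma>"
    and snd_fixed: "\<And>x y. x \<in> FX \<Longrightarrow> y \<in> FY \<Longrightarrow> snd (\<gamma> (x, y)) = y"
  shows "induced_by_X n FX adjX FY \<gamma>"
proof -
  define \<alpha> where "\<alpha> x = fst (\<gamma> (x, y0))" for x
  have \<gamma>_eq: "\<gamma> (x, y) = (\<alpha> x, y)" if "x \<in> FX" "y \<in> FY" for x y
    using snd_fixed[OF that] fst_pm_aut_vprod_eq[OF X V tree \<gamma> snd_fixed that y0]
    unfolding \<alpha>_def by (metis prod.collapse)
  have "bij_betw \<gamma> (FX \<times> FY) (FX \<times> FY)" using \<gamma> by (simp add: pm_aut_def vprod_flags_def)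
  then have "bij_betw \<alpha> FX FX" using y0 \<gamma>_eq by (rule bij_betw_fst_if_bij_betw_Times)
  moreover have "\<alpha> (adjX j x) = adjX j (\<alpha> x)" if "x \<in> FX" "j < n" for x j
    using fst_pm_aut_vprod_adj[OF X V y0 \<gamma> \<gamma>_eq gens] that by blast
  ultimately show ?thesis
    using \<gamma>_eq unfolding induced_by_X_def pm_aut_def by blast
qed

lemma normalizer_subset_if_induced_by_X:
  assumes X: "premaniplex n FX adjX" and V: "voltage_operator n m FY adjY eta"
    and x0: "x0 \<in> FX" and y0: "y0 \<in> FY"
    and conn: "connected_pm m (vprod_flags FX FY) (vprod_adj m adjX eta adjY)"
    and induced: "\<And>\<gamma>. pm_aut m (vprod_flags FX FY) (vprod_adj m adjX eta adjY) \<gamma>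
                    \<Longrightarrow> induced_by_X n FX adjX FY \<gamma>"
  shows "normalizer (Cox m) (stabilizer (Cox m) (cox_act (vprod_adj m adjX eta adjY)) (x0, y0))
    \<subseteq> stabilizer (Cox m) (cox_act adjY) y0"
proof
  have P: "premaniplex m (vprod_flags FX FY) (vprod_adj m adjX eta adjY)"
    by (rule premaniplex_vprod[OF X V])
  have b: "(x0, y0) \<in> vprod_flags FX FY" using x0 y0 by (simp add: vprod_flags_def)
  fix g assume "g \<in> normalizer (Cox m) (stabilizer (Cox m) (cox_act (vprod_adj m adjX eta adjY)) (x0, y0))"
  then obtain \<gamma> where g: "g \<in> carrier (Cox m)"
    and \<gamma>: "pm_aut m (vprod_flags FX FY) (vprod_adj m adjX eta adjY) \<gamma>"
      "\<gamma> (x0, y0) = cox_act (vprod_adj m adjX eta adjY) g (x0, y0)"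
    using normalizer_stabilizer_iff_ex_pm_aut[OF P conn b] by auto
  from induced[OF \<gamma>(1)] have "snd (\<gamma> (x0, y0)) = y0"
    using x0 y0 by (auto simp: induced_by_X_def)
  with g \<gamma>(2) x0 y0 show "g \<in> stabilizer (Cox m) (cox_act adjY) y0"
    by (simp add: stabilizer_def cox_act_vprod[OF X V])
qed

lemma induced_by_X_if_normalizer_subset:
  assumes X: "premaniplex n FX adjX" and X_conn: "connected_pm n FX adjX" and x0: "x0 \<in> FX"
    and V: "voltage_operator n m FY adjY eta" and tree: "trivial_tree_convention n m FY adjY eta"
    and Y_conn: "connected_pm m FY adjY" and y0: "y0 \<in> FY"
    and pc: "preserves_connectivity n m FY adjY eta"
    and normalizer: "normalizer (Cox m) (stabilizer (Cox m) (cox_act (vprod_adj m adjX eta adjY)) (x0, y0))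
      \<subseteq> stabilizer (Cox m) (cox_act adjY) y0"
    and \<gamma>: "pm_aut m (vprod_flags FX FY) (vprod_adj m adjX eta adjY) \<gamma>"
  shows "induced_by_X n FX adjX FY \<gamma>"
proof -
  have P: "premaniplex m (vprod_flags FX FY) (vprod_adj m adjX eta adjY)"
    by (rule premaniplex_vprod[OF X V])
  have b: "(x0, y0) \<in> vprod_flags FX FY" using x0 y0 by (simp add: vprod_flags_def)
  have onto: "carrier (Cox n) \<subseteq> eta y0 ` stabilizer (Cox m) (cox_act adjY) y0"
    by (rule preserves_connectivity_imp_voltage_onto[OF V pc y0])
  have conn: "connected_pm m (vprod_flags FX FY) (vprod_adj m adjX eta adjY)"
    by (rule connected_vprod[OF X X_conn x0 V Y_conn y0 onto])
  obtain g where g: "g \<in> carrier (Cox m)" "\<gamma> (x0, y0) = cox_act (vprod_adj m adjX eta adjY) g (x0, y0)"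
    using pm_aut_closed[OF \<gamma> b] conn connected_pm_iff_orbit_eq[OF P b] by (auto simp: orbit_def)
  then have "g \<in> stabilizer (Cox m) (cox_act adjY) y0"
    using normalizer_stabilizer_iff_ex_pm_aut[OF P conn b] \<gamma> normalizer by blast
  with g x0 y0 have "snd (\<gamma> (x0, y0)) = y0"
    by (simp add: stabilizer_def cox_act_vprod[OF X V])
  then show ?thesis
    using induced_by_X_if_snd_fixed[OF X V tree y0 _ \<gamma>] snd_pm_aut_vprod[OF X V conn x0 y0 \<gamma>]
      onto cox_gen_in_carrier by blast
qed

theorem proposition5p4:
  fixes n m :: nat
    and FX :: "'a set" and adjX :: "nat \<Rightarrow> 'a \<Rightarrow> 'a" and x0 :: 'a
    and FY :: "'b set" and adjY :: "nat \<Rightarrow> 'b \<Rightarrow> 'b" and y0 :: 'b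
    and eta :: "'b \<Rightarrow> nat list set \<Rightarrow> nat list set"
  assumes X: "premaniplex n FX adjX" and X_conn: "connected_pm n FX adjX" and x0: "x0 \<in> FX"
    and Y: "voltage_operator n m FY adjY eta" and Y_conv: "trivial_tree_convention n m FY adjY eta"
    and Y_conn: "connected_pm m FY adjY" and y0: "y0 \<in> FY"
  defines "N \<equiv> stabilizer (Cox n) (cox_act adjX) x0"
    and "L \<equiv> stabilizer (Cox m) (cox_act adjY) y0"
    and "\<zeta> \<equiv> (\<lambda>\<omega>. eta y0 \<omega>)"
  shows "(connected_pm m (vprod_flags FX FY) (vprod_adj m adjX eta adjY) \<and>
          (\<forall>\<gamma>. pm_aut m (vprod_flags FX FY) (vprod_adj m adjX eta adjY) \<gamma>
                 \<longrightarrow> induced_by_X n FX adjX FY \<gamma>)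
          \<longrightarrow> normalizer (Cox m) {\<omega> \<in> L. \<zeta> \<omega> \<in> N} \<subseteq> L)
       \<and> (preserves_connectivity n m FY adjY eta \<and> normalizer (Cox m) {\<omega> \<in> L. \<zeta> \<omega> \<in> N} \<subseteq> L
          \<longrightarrow> (\<forall>\<gamma>. pm_aut m (vprod_flags FX FY) (vprod_adj m adjX eta adjY) \<gamma>
                 \<longrightarrow> induced_by_X n FX adjX FY \<gamma>))"
proof -
  have stabilizer_base: "{\<omega> \<in> L. \<zeta> \<omega> \<in> N} = stabilizer (Cox m) (cox_act (vprod_adj m adjX eta adjY)) (x0, y0)"
    unfolding L_def N_def \<zeta>_def by (rule stabilizer_vprod[OF X Y x0 y0, symmetric])
  show ?thesis
    unfolding stabilizer_base unfolding L_def
    using normalizer_subset_if_induced_by_X[OF X Y x0 y0]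
      induced_by_X_if_normalizer_subset[OF X X_conn x0 Y Y_conv Y_conn y0]
    by blast
qed

end
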